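(* Let $X$ be a finite topological space and $x,y\in X$. Then $\Psi(x,y)=0$ if and only if $\Psi(x,a)\le \Psi(y,a)$ for every $a\in X$ (i.e. every entry in the row of $x$ of the furtherness matrix is at most the corresponding entry in the row of $y$).
   Context: For a finite topological space $X$ and $x\in X$, $U_x$ denotes the minimal open set containing $x$. A nested sequence of open sets around $x$ is a finite sequence $U_0\subsetneq U_1\subsetneq\cdots\subsetneq U_m=X$ of open sets with $U_0=U_x$ such that for each $j$ there is no open set $V$ with $U_j\subsetneq V\subsetneq U_{j+1}$. The furtherness function $\Psi:X\times X\to\{0,1,\dots,|X|-1\}$ is defined by: $\Psi(x,y)$ is the smallest integer $k\ge 0$ such that there exists a nested sequence $(U_j)_{j\ge0}$ of open sets around $x$ with $y\in U_k$. For $X=\{a_1,\dots,a_n\}$, the furtherness matrix $\Psi(X)$ is the $n\times n$ matrix with $(i,j)$ entry $\Psi(a_i,a_j)$. *)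

theory Defs
  imports "HOL-Analysis.Analysis"
begin

definition minimal_open :: "'a topology \<Rightarrow> 'a \<Rightarrow> 'a set" where
  "minimal_open T x = \<Inter>{U. openin T U \<and> x \<in> U}"

definition nested_seq :: "'a topology \<Rightarrow> 'a \<Rightarrow> (nat \<Rightarrow> 'a set) \<Rightarrow> nat \<Rightarrow> bool" where
  "nested_seq T x U m \<longleftrightarrow>
     U 0 = minimal_open T x \<and> U m = topspace T \<and>
     (\<forall>j\<le>m. openin T (U j)) \<and>
     (\<forall>j<m. U j \<subset> U (Suc j)) \<and>
     (\<forall>j<m. \<not> (\<exists>V. openin T V \<and> U j \<subset> V \<and> V \<subset> U (Suc j)))"

definition furtherness :: "'a topology \<Rightarrow> 'a \<Rightarrow> 'a \<Rightarrow> nat" where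
  "furtherness T x y = (LEAST k. \<exists>U m. nested_seq T x U m \<and> k \<le> m \<and> y \<in> U k)"

end

theory Submission
  imports Defs
begin

text \<open>A nested sequence around x is a maximal chain of open sets from U_x up to X.
  If y \<in> U_x, take a maximal chain V from U_y realising \<Psi>(y,a). Joining U_x to each member
  gives a chain from U_x \<union> U_y = U_x in which every step is either trivial or again a covering,
  by the modular law for open sets. Deleting the repetitions yields a maximal chain from U_x
  containing a no later than V does, so \<Psi>(x,a) \<le> \<Psi>(y,a). Conversely, \<Psi>(x,y) \<le> \<Psi>(y,y) = 0.\<close>

definition open_covers :: "'a topology \<Rightarrow> 'a set \<Rightarrow> 'a set \<Rightarrow> bool" where
  "open_covers T A B \<longleftrightarrow> A \<subset> B \<and> \<not> (\<exists>V. openin T V \<and> A \<subset> V \<and> V \<subset> B)"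

definition maximal_open_chain :: "'a topology \<Rightarrow> 'a set \<Rightarrow> (nat \<Rightarrow> 'a set) \<Rightarrow> nat \<Rightarrow> bool" where
  "maximal_open_chain T A U m \<longleftrightarrow>
     U 0 = A \<and> U m = topspace T \<and> (\<forall>j\<le>m. openin T (U j)) \<and>
     (\<forall>j<m. open_covers T (U j) (U (Suc j)))"

definition chain_reaches :: "'a topology \<Rightarrow> 'a set \<Rightarrow> 'a \<Rightarrow> nat \<Rightarrow> bool" where
  "chain_reaches T A a k \<longleftrightarrow>
     (\<exists>U m j. maximal_open_chain T A U m \<and> j \<le> k \<and> j \<le> m \<and> a \<in> U j)"

lemma nested_seq_iff_maximal_open_chain:
  "nested_seq T x U m \<longleftrightarrow> maximal_open_chain T (minimal_open T x) U m"
  unfolding nested_seq_def maximal_open_chain_def open_covers_def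
  by (simp only: imp_conjR all_conj_distrib conj_assoc)

lemma finite_openin_sets:
  assumes "finite (topspace T)"
  shows "finite {U. openin T U \<and> P U}"
  by (rule finite_subset[of _ "Pow (topspace T)"]) (use assms openin_subset in auto)

lemma openin_minimal_open:
  assumes "finite (topspace T)" and "x \<in> topspace T"
  shows "openin T (minimal_open T x)"
  unfolding minimal_open_def using assms finite_openin_sets by (intro openin_Inter) auto

lemma minimal_open_in: "x \<in> minimal_open T x"
  unfolding minimal_open_def by auto

lemma minimal_open_subset: "openin T U \<Longrightarrow> x \<in> U \<Longrightarrow> minimal_open T x \<subseteq> U"
  unfolding minimal_open_def by auto

lemma open_covers_exists:
  assumes fin: "finite (topspace T)" and A: "openin T A" "A \<noteq> topspace T"
  shows "\<exists>B. openin T B \<and> open_covers T A B"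
proof -
  let ?S = "{B. openin T B \<and> A \<subset> B}"
  have "?S \<noteq> {}"
    using A openin_subset openin_topspace by blast
  then obtain B where "B \<in> ?S" and min: "\<forall>C\<in>?S. C \<subseteq> B \<longrightarrow> B = C"
    using finite_has_minimal[OF finite_openin_sets[OF fin]] by meson
  then have B: "openin T B" "A \<subset> B"
    by auto
  have "\<not> (\<exists>V. openin T V \<and> A \<subset> V \<and> V \<subset> B)"
    using min by blast
  then show ?thesis
    using B unfolding open_covers_def by blast
qed

text \<open>Modular law: an open Z strictly between A \<union> B and A \<union> B' would make the open set
  Z \<inter> B' strictly between B and B'.\<close>
lemma open_covers_Un:
  assumes "openin T A" "openin T B'" "open_covers T B B'"
  shows "open_covers T (A \<union> B) (A \<union> B') \<or> A \<union> B = A \<union> B'"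
proof (rule disjCI)
  assume ne: "A \<union> B \<noteq> A \<union> B'"
  have "\<not> (openin T Z \<and> A \<union> B \<subset> Z \<and> Z \<subset> A \<union> B')" for Z
  proof
    assume Z: "openin T Z \<and> A \<union> B \<subset> Z \<and> Z \<subset> A \<union> B'"
    then have "openin T (Z \<inter> B')" "B \<subseteq> Z \<inter> B'" "Z \<inter> B' \<subseteq> B'"
      using assms unfolding open_covers_def by auto
    then have "Z \<inter> B' = B \<or> Z \<inter> B' = B'"
      using assms(3) unfolding open_covers_def by blast
    then show False
      using Z by blast
  qed
  then show "open_covers T (A \<union> B) (A \<union> B')"
    using ne assms(3) unfolding open_covers_def by blast
qed

lemma maximal_open_chain_Cons:
  assumes "maximal_open_chain T B U m" "openin T A" "open_covers T A B"
  shows "maximal_open_chain T A (case_nat A U) (Suc m)"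
  using assms unfolding maximal_open_chain_def
  by (auto split: nat.split)

lemma maximal_open_chain_exists:
  assumes fin: "finite (topspace T)" and "openin T A"
  shows "\<exists>U m. maximal_open_chain T A U m"
  using assms(2)
proof (induction "card (topspace T - A)" arbitrary: A rule: less_induct)
  case (less A)
  show ?case
  proof (cases "A = topspace T")
    case True
    then have "maximal_open_chain T A (\<lambda>_. A) 0"
      using less.prems unfolding maximal_open_chain_def by simp
    then show ?thesis by blast
  next
    case False
    then obtain B where B: "openin T B" "open_covers T A B"
      using open_covers_exists[OF fin less.prems] by blast
    have "topspace T - B \<subset> topspace T - A"
      using B openin_subset[OF B(1)] unfolding open_covers_def by blast
    then have "card (topspace T - B) < card (topspace T - A)"
      using fin by (meson finite_Diff psubset_card_mono)
    then obtain U m where "maximal_open_chain T B U m"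
      using less.hyps B by blast
    then show ?thesis
      using maximal_open_chain_Cons B less.prems by blast
  qed
qed

lemma chain_reaches_mono: "chain_reaches T A a j \<Longrightarrow> j \<le> k \<Longrightarrow> chain_reaches T A a k"
  unfolding chain_reaches_def by (meson order_trans)

lemma chain_reaches_0_iff:
  assumes "finite (topspace T)" "openin T A"
  shows "chain_reaches T A a 0 \<longleftrightarrow> a \<in> A"
proof
  show "a \<in> A" if "chain_reaches T A a 0"
    using that unfolding chain_reaches_def maximal_open_chain_def by auto
  obtain U m where U: "maximal_open_chain T A U m"
    using maximal_open_chain_exists[OF assms] by blast
  show "chain_reaches T A a 0" if "a \<in> A"
    unfolding chain_reaches_def
  proof (intro exI conjI)
    show "maximal_open_chain T A U m" "a \<in> U 0"
      using U that unfolding maximal_open_chain_def by auto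
  qed auto
qed

lemma chain_reaches_of_chain_with_repetitions:
  assumes "W 0 = A" "W m = topspace T" "\<forall>j\<le>m. openin T (W j)"
    and "\<forall>j<m. W j = W (Suc j) \<or> open_covers T (W j) (W (Suc j))"
    and "k \<le> m" "a \<in> W k"
  shows "chain_reaches T A a k"
  using assms
proof (induction m arbitrary: W A k)
  case 0
  then have "maximal_open_chain T A W 0"
    unfolding maximal_open_chain_def by simp
  then show ?case
    using 0 unfolding chain_reaches_def by blast
next
  case (Suc m)
  have "W 0 \<subseteq> W 1"
    using Suc.prems(4) unfolding open_covers_def by auto
  then have "a \<in> W (Suc (k - 1))"
    using Suc.prems(1,6) by (cases k) auto
  then have reach: "chain_reaches T (W 1) a (k - 1)"
    using Suc.prems by (intro Suc.IH[of "W \<circ> Suc"]) auto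
  then obtain U m' j where U: "maximal_open_chain T (W 1) U m'" "j \<le> k - 1" "j \<le> m'" "a \<in> U j"
    unfolding chain_reaches_def by blast
  consider "W 0 = W 1" | "open_covers T (W 0) (W 1)"
    using Suc.prems(4) by fastforce
  then show ?case
  proof cases
    case 1
    then show ?thesis
      using reach chain_reaches_mono Suc.prems(1) by (metis One_nat_def diff_le_self)
  next
    case 2
    then have chain: "maximal_open_chain T A (case_nat A U) (Suc m')"
      using U(1) Suc.prems(1,3) by (intro maximal_open_chain_Cons) auto
    show ?thesis
    proof (cases k)
      case 0
      then show ?thesis
        using chain Suc.prems unfolding chain_reaches_def by fastforce
    next
      case (Suc k')
      then show ?thesis
        using chain U unfolding chain_reaches_def
        by (intro exI[of _ "case_nat A U"] exI[of _ "Suc m'"] exI[of _ "Suc j"]) auto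
    qed
  qed
qed

lemma chain_reaches_Un:
  assumes "chain_reaches T B a k" "openin T A"
  shows "chain_reaches T (A \<union> B) a k"
proof -
  obtain V m j where V: "maximal_open_chain T B V m" "j \<le> k" "j \<le> m" "a \<in> V j"
    using assms(1) unfolding chain_reaches_def by blast
  have "chain_reaches T (A \<union> B) a j"
  proof (rule chain_reaches_of_chain_with_repetitions[of "\<lambda>i. A \<union> V i" _ m])
    show "\<forall>i<m. A \<union> V i = A \<union> V (Suc i) \<or> open_covers T (A \<union> V i) (A \<union> V (Suc i))"
    proof (intro allI impI)
      fix i
      assume "i < m"
      then have "openin T (V (Suc i))" "open_covers T (V i) (V (Suc i))"
        using V(1) unfolding maximal_open_chain_def by auto
      then show "A \<union> V i = A \<union> V (Suc i) \<or> open_covers T (A \<union> V i) (A \<union> V (Suc i))"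
        using open_covers_Un[OF assms(2)] by blast
    qed
    show "A \<union> V 0 = A \<union> B" "A \<union> V m = topspace T" "\<forall>i\<le>m. openin T (A \<union> V i)"
      using V(1) assms(2) openin_subset[OF assms(2)] unfolding maximal_open_chain_def by auto
  qed (use V(3,4) in auto)
  then show ?thesis
    using V(2) by (rule chain_reaches_mono)
qed

lemma furtherness_le_iff:
  assumes fin: "finite (topspace T)" and x: "x \<in> topspace T" and a: "a \<in> topspace T"
  shows "furtherness T x a \<le> k \<longleftrightarrow> chain_reaches T (minimal_open T x) a k"
proof
  obtain U m where "maximal_open_chain T (minimal_open T x) U m"
    using maximal_open_chain_exists[OF fin openin_minimal_open[OF fin x]] by blast
  then have "nested_seq T x U m \<and> m \<le> m \<and> a \<in> U m"
    using a by (simp add: nested_seq_iff_maximal_open_chain maximal_open_chain_def)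
  then have "\<exists>k U m. nested_seq T x U m \<and> k \<le> m \<and> a \<in> U k"
    by blast
  then have "\<exists>U m. nested_seq T x U m \<and> furtherness T x a \<le> m \<and> a \<in> U (furtherness T x a)"
    unfolding furtherness_def by (rule LeastI_ex)
  then obtain V n where "maximal_open_chain T (minimal_open T x) V n"
    "furtherness T x a \<le> n" "a \<in> V (furtherness T x a)"
    unfolding nested_seq_iff_maximal_open_chain by blast
  moreover assume "furtherness T x a \<le> k"
  ultimately show "chain_reaches T (minimal_open T x) a k"
    unfolding chain_reaches_def by blast
next
  assume "chain_reaches T (minimal_open T x) a k"
  then obtain U m j where "maximal_open_chain T (minimal_open T x) U m" "j \<le> k" "j \<le> m" "a \<in> U j"
    unfolding chain_reaches_def by blast
  then have "furtherness T x a \<le> j"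
    unfolding furtherness_def nested_seq_iff_maximal_open_chain by (intro Least_le) blast
  then show "furtherness T x a \<le> k"
    using \<open>j \<le> k\<close> by linarith
qed

lemma furtherness_eq_0_iff:
  assumes "finite (topspace T)" "x \<in> topspace T" "y \<in> topspace T"
  shows "furtherness T x y = 0 \<longleftrightarrow> y \<in> minimal_open T x"
  using furtherness_le_iff[OF assms, of 0] chain_reaches_0_iff[OF assms(1) openin_minimal_open[OF assms(1,2)]]
  by simp

lemma furtherness_antimono:
  assumes fin: "finite (topspace T)" and x: "x \<in> topspace T" and y: "y \<in> minimal_open T x"
    and a: "a \<in> topspace T"
  shows "furtherness T x a \<le> furtherness T y a"
proof -
  have yX: "y \<in> topspace T"
    using openin_subset[OF openin_minimal_open[OF fin x]] y by (rule subsetD)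
  have "chain_reaches T (minimal_open T y) a (furtherness T y a)"
    using furtherness_le_iff[OF fin yX a, of "furtherness T y a"] by simp
  then have "chain_reaches T (minimal_open T x \<union> minimal_open T y) a (furtherness T y a)"
    using openin_minimal_open[OF fin x] by (rule chain_reaches_Un)
  moreover have "minimal_open T x \<union> minimal_open T y = minimal_open T x"
    using minimal_open_subset[OF openin_minimal_open[OF fin x] y] by blast
  ultimately have "chain_reaches T (minimal_open T x) a (furtherness T y a)"
    by simp
  then show ?thesis
    using furtherness_le_iff[OF fin x a] by simp
qed

theorem mainTheorem13:
  fixes T :: "'a topology" and x y :: 'a
  assumes "finite (topspace T)" and "x \<in> topspace T" and "y \<in> topspace T"
  shows "furtherness T x y = 0 \<longleftrightarrow>
         (\<forall>a\<in>topspace T. furtherness T x a \<le> furtherness T y a)"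
proof
  assume "furtherness T x y = 0"
  then have "y \<in> minimal_open T x"
    using furtherness_eq_0_iff[OF assms] by simp
  then show "\<forall>a\<in>topspace T. furtherness T x a \<le> furtherness T y a"
    using furtherness_antimono[OF assms(1,2)] by blast
next
  assume "\<forall>a\<in>topspace T. furtherness T x a \<le> furtherness T y a"
  then have "furtherness T x y \<le> furtherness T y y"
    using assms(3) by blast
  moreover have "furtherness T y y = 0"
    using furtherness_eq_0_iff[OF assms(1,3,3)] minimal_open_in by simp
  ultimately show "furtherness T x y = 0"
    by linarith
qed

end
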